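(* Let $P$ be the uniform distribution on $[0,1]$ and $\beta=\{\frac14,\frac12\}$. The conditional optimal set of three-points for $P$ with respect to $\beta$ is $\alpha_3=\{\frac14,\frac12,\frac56\}$, with $V_3=\frac{77}{6912}$ ($\approx0.01114$).
   Context: For a Borel probability measure $P$ on $\mathbb{R}$ and finite $\beta$ with $\mathrm{card}(\beta)=r$, for $n\ge r$, $V_n=\inf\{\int\min_{a\in\alpha\cup\beta}(x-a)^2dP(x):\mathrm{card}(\alpha)\le n-r\}$; a set $\alpha\cup\beta$ attaining the infimum, with each point of $\beta$ having a Voronoi region of positive $P$-measure, is a conditional optimal set of $n$-points with respect to $\beta$. *)

theory Defs
  imports "HOL-Analysis.Analysis"
begin

definition distortion :: "real measure \<Rightarrow> real set \<Rightarrow> real" where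
  "distortion P S = (\<integral>x. Min ((\<lambda>a. (x - a)^2) ` S) \<partial>P)"

definition cond_V :: "real measure \<Rightarrow> real set \<Rightarrow> nat \<Rightarrow> real" where
  "cond_V P \<beta> n = (INF \<alpha> \<in> {\<alpha>. finite \<alpha> \<and> card \<alpha> \<le> n - card \<beta>}. distortion P (\<alpha> \<union> \<beta>))"

definition voronoi :: "real set \<Rightarrow> real \<Rightarrow> real set" where
  "voronoi S a = {x. \<forall>b\<in>S. \<bar>x - a\<bar> \<le> \<bar>x - b\<bar>}"

definition cond_optimal :: "real measure \<Rightarrow> real set \<Rightarrow> nat \<Rightarrow> real set \<Rightarrow> bool" where
  "cond_optimal P \<beta> n S \<longleftrightarrow>
     (\<exists>\<alpha>. finite \<alpha> \<and> card \<alpha> \<le> n - card \<beta> \<and> S = \<alpha> \<union> \<beta> \<and>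
          distortion P S = cond_V P \<beta> n \<and>
          (\<forall>b\<in>\<beta>. measure P (voronoi S b) > 0))"

end

theory Submission
  imports Defs
begin

text \<open>
  With at most one free point a added to {1/4, 1/2} (adding none is the case a = 1/4), the
  distortion is the integral over [0,1] of the squared distance to {a, 1/4, 1/2}, computed
  cell by cell on the Voronoi partition. If a <= 1/2 or a >= 3/2, the point 1/2 stays nearest
  on all of [1/2,1], which alone costs 1/24 > 77/6912. For 1/2 < a < 3/2 the cells in [0,1] are
  [0,3/8], [3/8,(a+1/2)/2] and [(a+1/2)/2,1], and the distortion is
  77/6912 + (a - 5/6)^2 (11/6 - a)/4, minimal exactly at a = 5/6.
\<close>

definition min_sq_dist :: "real set \<Rightarrow> real \<Rightarrow> real" where
  "min_sq_dist S x = Min ((\<lambda>a. (x - a)^2) ` S)"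

lemma continuous_on_min_sq_dist:
  assumes "finite S" "S \<noteq> {}"
  shows "continuous_on A (min_sq_dist S)"
  using assms unfolding min_sq_dist_def
proof (induction S rule: finite_ne_induct)
  case (insert a S)
  then show ?case by (simp add: continuous_on_min continuous_intros)
qed (simp add: continuous_intros)

lemma min_sq_dist_voronoi:
  assumes "finite S" "c \<in> S" "x \<in> voronoi S c"
  shows "min_sq_dist S x = (x - c)^2"
  unfolding min_sq_dist_def
proof (rule Min_eqI)
  show "y \<ge> (x - c)^2" if "y \<in> (\<lambda>a. (x - a)^2) ` S" for y
    using that assms(3) by (auto simp: voronoi_def abs_le_square_iff)
qed (use assms in auto)

lemma integral_uniform_measure_Icc:
  fixes f :: "real \<Rightarrow> real"
  assumes "u < v" "f \<in> borel_measurable borel" "continuous_on {u..v} f"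
  shows "(\<integral>x. f x \<partial>uniform_measure lborel {u..v}) = integral {u..v} f / (v - u)"
proof -
  have "uniform_measure lborel {u..v} = density lborel (\<lambda>x. ennreal (indicator {u..v} x / (v - u)))"
    unfolding uniform_measure_def using assms(1) divide_ennreal[of 1 "v - u"]
    by (intro density_cong) (auto split: split_indicator)
  then have "(\<integral>x. f x \<partial>uniform_measure lborel {u..v})
      = (\<integral>x. (indicator {u..v} x / (v - u)) *\<^sub>R f x \<partial>lborel)"
    using assms by (simp add: integral_density)
  also have "\<dots> = (LINT x : {u..v} | lborel. f x) / (v - u)"
    by (simp add: set_lebesgue_integral_def)
  also have "\<dots> = integral {u..v} f / (v - u)"
    using assms by (simp add: set_borel_integral_eq_integral(2) borel_integrable_atLeastAtMost')
  finally show ?thesis .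
qed

lemma distortion_uniform_measure_Icc:
  assumes "u < v" "finite S" "S \<noteq> {}"
  shows "distortion (uniform_measure lborel {u..v}) S = integral {u..v} (min_sq_dist S) / (v - u)"
proof -
  have "continuous_on UNIV (min_sq_dist S)"
    using assms(2,3) by (rule continuous_on_min_sq_dist)
  then show ?thesis
    unfolding distortion_def min_sq_dist_def[symmetric]
    by (intro integral_uniform_measure_Icc assms(1) borel_measurable_continuous_onI)
       (auto intro: continuous_on_subset)
qed

lemma integral_square_diff:
  assumes "u \<le> v"
  shows "integral {u..v} (\<lambda>x::real. (x - c)^2) = ((v - c)^3 - (u - c)^3) / 3"
proof -
  have "((\<lambda>x::real. (x - c)^2) has_integral ((v - c)^3 / 3 - (u - c)^3 / 3)) {u..v}"
    using assms
    by (intro fundamental_theorem_of_calculus[where f = "\<lambda>x. (x - c)^3 / 3"])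
       (auto intro!: derivative_eq_intros simp: has_real_derivative_iff_has_vector_derivative[symmetric]
             power2_eq_square)
  then show ?thesis by (simp add: integral_unique diff_divide_distrib)
qed

lemma integral_min_sq_dist_voronoi:
  assumes "finite S" "c \<in> S" "u \<le> v" "{u..v} \<subseteq> voronoi S c"
  shows "integral {u..v} (min_sq_dist S) = ((v - c)^3 - (u - c)^3) / 3"
proof -
  have "integral {u..v} (min_sq_dist S) = integral {u..v} (\<lambda>x. (x - c)^2)"
    using assms by (intro integral_cong min_sq_dist_voronoi) auto
  with assms(3) show ?thesis by (simp add: integral_square_diff)
qed

lemma integral_min_sq_dist_far:
  assumes "a \<le> 1/2 \<or> 3/2 \<le> a"
  shows "1/24 \<le> integral {0..1} (min_sq_dist {a, 1/4, 1/2})"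
proof -
  let ?S = "{a, 1/4, 1/2 :: real}"
  have "{1/2..1} \<subseteq> voronoi ?S (1/2)"
    using assms by (auto simp: voronoi_def)
  then have "integral {1/2..1} (min_sq_dist ?S) = 1/24"
    by (subst integral_min_sq_dist_voronoi) (auto simp: power3_eq_cube)
  moreover have "integral {1/2..1} (min_sq_dist ?S) \<le> integral {0..1} (min_sq_dist ?S)"
    by (intro integral_subset_le integrable_continuous_interval continuous_on_min_sq_dist)
       (auto simp: min_sq_dist_def)
  ultimately show ?thesis by simp
qed

lemma integral_min_sq_dist_near:
  assumes "1/2 < a" "a < 3/2"
  shows "integral {0..1} (min_sq_dist {a, 1/4, 1/2}) = 77/6912 + (a - 5/6)^2 * (11/6 - a) / 4"
proof -
  let ?S = "{a, 1/4, 1/2 :: real}"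
  define m where "m = (1/2 + a) / 2"
  have m: "3/8 \<le> m" "m \<le> 1" using assms by (auto simp: m_def)
  have integrable: "min_sq_dist ?S integrable_on {u..v}" for u v
    by (intro integrable_continuous_interval continuous_on_min_sq_dist) auto
  have "integral {0..1} (min_sq_dist ?S)
      = integral {0..3/8} (min_sq_dist ?S) + integral {3/8..m} (min_sq_dist ?S)
        + integral {m..1} (min_sq_dist ?S)"
    using m integrable
    by (simp add: Henstock_Kurzweil_Integration.integral_combine)
  also have "integral {0..3/8} (min_sq_dist ?S) = ((3/8 - 1/4)^3 - (0 - 1/4)^3) / 3"
    using assms by (intro integral_min_sq_dist_voronoi) (auto simp: voronoi_def)
  also have "integral {3/8..m} (min_sq_dist ?S) = ((m - 1/2)^3 - (3/8 - 1/2)^3) / 3"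
    using assms m by (intro integral_min_sq_dist_voronoi) (auto simp: voronoi_def m_def)
  also have "integral {m..1} (min_sq_dist ?S) = ((1 - a)^3 - (m - a)^3) / 3"
    using assms m by (intro integral_min_sq_dist_voronoi) (auto simp: voronoi_def m_def)
  finally show ?thesis
    by (simp add: m_def power3_eq_cube power2_eq_square field_simps)
qed

lemma distortion_unit_interval_ge:
  "77/6912 \<le> distortion (uniform_measure lborel {0..1}) {a, 1/4, 1/2}"
  and distortion_unit_interval_eq_iff:
  "distortion (uniform_measure lborel {0..1}) {a, 1/4, 1/2} = 77/6912 \<longleftrightarrow> a = 5/6"
proof -
  have D: "distortion (uniform_measure lborel {0..1}) {a, 1/4, 1/2}
      = integral {0..1} (min_sq_dist {a, 1/4, 1/2})"
    by (simp add: distortion_uniform_measure_Icc)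
  consider "a \<le> 1/2 \<or> 3/2 \<le> a" | "1/2 < a" "a < 3/2" by linarith
  then have "77/6912 \<le> integral {0..1} (min_sq_dist {a, 1/4, 1/2})
      \<and> (integral {0..1} (min_sq_dist {a, 1/4, 1/2}) = 77/6912 \<longleftrightarrow> a = 5/6)"
  proof cases
    case 1
    then show ?thesis using integral_min_sq_dist_far[OF 1] by auto
  next
    case 2
    then have "0 < 11/6 - a" by simp
    then have "0 \<le> (a - 5/6)^2 * (11/6 - a) / 4" "(a - 5/6)^2 * (11/6 - a) / 4 = 0 \<longleftrightarrow> a = 5/6"
      by simp_all
    then show ?thesis using integral_min_sq_dist_near[OF 2] by linarith
  qed
  then show "77/6912 \<le> distortion (uniform_measure lborel {0..1}) {a, 1/4, 1/2}"
    and "distortion (uniform_measure lborel {0..1}) {a, 1/4, 1/2} = 77/6912 \<longleftrightarrow> a = 5/6"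
    unfolding D by auto
qed

lemma card_le_1_UnE:
  assumes "finite \<alpha>" "card \<alpha> \<le> 1" "B \<noteq> {}"
  obtains a where "\<alpha> \<union> B = insert a B"
proof (cases "\<alpha> = {}")
  case True
  with assms(3) that show ?thesis by blast
next
  case False
  with assms(1,2) have "card \<alpha> = 1" by (simp add: le_Suc_eq)
  then obtain a where "\<alpha> = {a}" by (rule card_1_singletonE)
  with that show ?thesis by simp
qed

lemma distortion_unit_interval_Un_ge:
  "finite \<alpha> \<Longrightarrow> card \<alpha> \<le> 1 \<Longrightarrow>
    77/6912 \<le> distortion (uniform_measure lborel {0..1}) (\<alpha> \<union> {1/4, 1/2})"
  and distortion_unit_interval_Un_eq_iff:
  "finite \<alpha> \<Longrightarrow> card \<alpha> \<le> 1 \<Longrightarrow>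
    distortion (uniform_measure lborel {0..1}) (\<alpha> \<union> {1/4, 1/2}) = 77/6912
      \<longleftrightarrow> \<alpha> \<union> {1/4, 1/2} = {1/4, 1/2, 5/6}"
proof -
  assume "finite \<alpha>" "card \<alpha> \<le> 1"
  from card_le_1_UnE[OF this, of "{1/4, 1/2}"]
  obtain a where a: "\<alpha> \<union> {1/4, 1/2} = {a, 1/4, 1/2 :: real}"
    by blast
  show "77/6912 \<le> distortion (uniform_measure lborel {0..1}) (\<alpha> \<union> {1/4, 1/2})"
    unfolding a by (rule distortion_unit_interval_ge)
  have "{a, 1/4, 1/2} = {1/4, 1/2, 5/6 :: real} \<longleftrightarrow> a = 5/6"
  proof
    assume "{a, 1/4, 1/2} = {1/4, 1/2, 5/6 :: real}"
    then have "5/6 \<in> {a, 1/4, 1/2 :: real}" by simp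
    then show "a = 5/6" by auto
  qed auto
  then show "distortion (uniform_measure lborel {0..1}) (\<alpha> \<union> {1/4, 1/2}) = 77/6912
         \<longleftrightarrow> \<alpha> \<union> {1/4, 1/2} = {1/4, 1/2, 5/6}"
    unfolding a distortion_unit_interval_eq_iff by blast
qed

lemma measure_voronoi_unit_interval_pos:
  "\<forall>b\<in>{1/4, 1/2}. 0 < measure (uniform_measure lborel {0..1}) (voronoi {1/4, 1/2, 5/6} b)"
proof -
  have regions: "voronoi {1/4, 1/2, 5/6} (1/4) = {..3/8}" "voronoi {1/4, 1/2, 5/6} (1/2) = {3/8..2/3}"
    by (auto simp: voronoi_def)
  show ?thesis by (simp add: regions measure_uniform_measure)
qed

lemma cond_V_eqI:
  assumes "finite \<alpha>\<^sub>0" "card \<alpha>\<^sub>0 \<le> n - card \<beta>" "distortion P (\<alpha>\<^sub>0 \<union> \<beta>) = v"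
    and "\<And>\<alpha>. finite \<alpha> \<Longrightarrow> card \<alpha> \<le> n - card \<beta> \<Longrightarrow> v \<le> distortion P (\<alpha> \<union> \<beta>)"
  shows "cond_V P \<beta> n = v"
  unfolding cond_V_def
proof (rule cInf_eq_minimum)
  show "v \<in> (\<lambda>\<alpha>. distortion P (\<alpha> \<union> \<beta>)) ` {\<alpha>. finite \<alpha> \<and> card \<alpha> \<le> n - card \<beta>}"
    using assms(1-3) by (intro image_eqI[where x = "\<alpha>\<^sub>0"]) auto
qed (use assms(4) in blast)

lemma cond_V_unit_interval:
  "cond_V (uniform_measure lborel {0..1}) {1/4, 1/2} 3 = 77/6912"
proof (rule cond_V_eqI[where \<alpha>\<^sub>0 = "{5/6}"])
  show "distortion (uniform_measure lborel {0..1}) ({5/6} \<union> {1/4, 1/2}) = 77/6912"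
    by (subst distortion_unit_interval_Un_eq_iff) auto
  show "77/6912 \<le> distortion (uniform_measure lborel {0..1}) (\<alpha> \<union> {1/4, 1/2})"
    if "finite \<alpha>" "card \<alpha> \<le> 3 - card {1/4, 1/2 :: real}" for \<alpha>
    using that by (intro distortion_unit_interval_Un_ge) simp_all
qed simp_all

lemma cond_optimal_unit_interval_iff:
  "cond_optimal (uniform_measure lborel {0..1}) {1/4, 1/2} 3 S \<longleftrightarrow> S = {1/4, 1/2, 5/6}"
proof
  assume "cond_optimal (uniform_measure lborel {0..1}) {1/4, 1/2} 3 S"
  then obtain \<alpha> where "finite \<alpha>" "card \<alpha> \<le> 3 - card {1/4, 1/2 :: real}"
    and S: "S = \<alpha> \<union> {1/4, 1/2}" "distortion (uniform_measure lborel {0..1}) S = 77/6912"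
    unfolding cond_optimal_def cond_V_unit_interval by blast
  then have "finite \<alpha>" "card \<alpha> \<le> 1"
    by simp_all
  from distortion_unit_interval_Un_eq_iff[OF this] S show "S = {1/4, 1/2, 5/6}"
    by simp
next
  assume S: "S = {1/4, 1/2, 5/6}"
  have "distortion (uniform_measure lborel {0..1}) ({5/6} \<union> {1/4, 1/2}) = 77/6912"
    by (subst distortion_unit_interval_Un_eq_iff) auto
  with S measure_voronoi_unit_interval_pos
  show "cond_optimal (uniform_measure lborel {0..1}) {1/4, 1/2} 3 S"
    unfolding cond_optimal_def cond_V_unit_interval
    by (intro exI[of _ "{5/6}"]) simp
qed

theorem proposition3p2:
  defines "P \<equiv> uniform_measure lborel {0..1::real}"
  shows "{S. cond_optimal P {1/4, 1/2} 3 S} = {{1/4, 1/2, 5/6}}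
         \<and> cond_V P {1/4, 1/2} 3 = 77/6912"
  unfolding P_def using cond_optimal_unit_interval_iff cond_V_unit_interval by blast

end
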